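(* (Quantalic McShane–Whitney Extension Theorem.) Let $\mathcal{V}$ be a quantale and let $(X,d)$ be a $\mathcal{V}$-category. For every subset $Y\subseteq X$ and every map $f\colon Y\to\mathcal{V}$ that is non-expansive from $(Y,d|_{Y\times Y})$ to $(\mathcal{V},d_{\mathcal{V}})$, there exists a map $\bar f\colon X\to\mathcal{V}$ that is non-expansive from $(X,d)$ to $(\mathcal{V},d_{\mathcal{V}})$ and satisfies $\bar f(y)=f(y)$ for all $y\in Y$.
   Context: A quantale is a complete lattice $(\mathcal{V},\sqsubseteq)$ equipped with a commutative monoid structure $(\mathcal{V},\otimes,k)$ such that $a\otimes\bigsqcup_i b_i=\bigsqcup_i (a\otimes b_i)$ for all $a$ and all families $(b_i)$. Its residuation $d_{\mathcal{V}}\colon\mathcal{V}\times\mathcal{V}\to\mathcal{V}$ is the map determined by $a\otimes b\sqsubseteq c \iff b\sqsubseteq d_{\mathcal{V}}(a,c)$ for all $a,b,c\in\mathcal{V}$. A $\mathcal{V}$-graph on a set $X$ is a map $d\colon X\times X\to\mathcal{V}$; it is a $\mathcal{V}$-category if $k\sqsubseteq d(x,x)$ and $d(x,y)\otimes d(y,z)\sqsubseteq d(x,z)$ for all $x,y,z\in X$. A map $f\colon X\to Z$ is non-expansive from $(X,d_X)$ to $(Z,d_Z)$ if $d_X(x,x')\sqsubseteq d_Z(f(x),f(x'))$ for all $x,x'\in X$. *)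

theory Defs
  imports Main
begin

definition quantale :: "('v::complete_lattice \<Rightarrow> 'v \<Rightarrow> 'v) \<Rightarrow> 'v \<Rightarrow> bool" where
  "quantale tensor k \<longleftrightarrow>
     (\<forall>a b c. tensor (tensor a b) c = tensor a (tensor b c)) \<and>
     (\<forall>a b. tensor a b = tensor b a) \<and>
     (\<forall>a. tensor k a = a) \<and>
     (\<forall>a B. tensor a (Sup B) = Sup ((\<lambda>b. tensor a b) ` B))"

text \<open>Residuation: the map with a tensor b <= c iff b <= residuum a c
(in a quantale this is exactly the join of all such b).\<close>
definition residuum :: "('v::complete_lattice \<Rightarrow> 'v \<Rightarrow> 'v) \<Rightarrow> 'v \<Rightarrow> 'v \<Rightarrow> 'v" where
  "residuum tensor a c = Sup {b. tensor a b \<le> c}"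

definition V_category :: "('v::complete_lattice \<Rightarrow> 'v \<Rightarrow> 'v) \<Rightarrow> 'v \<Rightarrow> 'x set \<Rightarrow> ('x \<Rightarrow> 'x \<Rightarrow> 'v) \<Rightarrow> bool" where
  "V_category tensor k X d \<longleftrightarrow>
     (\<forall>x\<in>X. k \<le> d x x) \<and>
     (\<forall>x\<in>X. \<forall>y\<in>X. \<forall>z\<in>X. tensor (d x y) (d y z) \<le> d x z)"

definition non_expansive :: "'x set \<Rightarrow> ('x \<Rightarrow> 'x \<Rightarrow> 'v::order) \<Rightarrow> ('z \<Rightarrow> 'z \<Rightarrow> 'v) \<Rightarrow> ('x \<Rightarrow> 'z) \<Rightarrow> bool" where
  "non_expansive X dX dZ f \<longleftrightarrow> (\<forall>x\<in>X. \<forall>x'\<in>X. dX x x' \<le> dZ (f x) (f x'))"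

end

theory Submission
  imports Defs
begin

text \<open>The extension is the quantalic McShane formula
  \<open>fbar x = \<Squnion>y\<in>Y. f y \<otimes> d y x\<close>; for Lawvere's quantale \<open>[0,\<infinity>]\<close> (reversed order,
  \<open>\<otimes> = +\<close>) it is the classical \<open>inf y\<in>Y. f y + d y x\<close>. Via the residuation, a map
  \<open>g\<close> is non-expansive into \<open>(\<V>, d\<^sub>\<V>)\<close> iff \<open>g x \<otimes> d x x' \<sqsubseteq> g x'\<close>. For \<open>fbar\<close> this follows
  from the transitivity of \<open>d\<close> and the distributivity of \<open>\<otimes>\<close> over joins. On \<open>Y\<close>,
  the term \<open>y = x\<close> together with \<open>k \<sqsubseteq> d x x\<close> gives \<open>f x \<sqsubseteq> fbar x\<close>, and the
  non-expansiveness of \<open>f\<close> gives the converse.\<close>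

lemma quantale_tensor_mono_right:
  fixes tensor :: "'v::complete_lattice \<Rightarrow> 'v \<Rightarrow> 'v"
  assumes "quantale tensor k" and "b \<le> b'"
  shows "tensor a b \<le> tensor a b'"
proof -
  have "tensor a b' = tensor a (Sup {b, b'})"
    using \<open>b \<le> b'\<close> by (simp add: sup.absorb2)
  also have "\<dots> = Sup ((\<lambda>x. tensor a x) ` {b, b'})"
    using assms(1) unfolding quantale_def by metis
  also have "\<dots> = sup (tensor a b) (tensor a b')"
    by simp
  finally show ?thesis
    by (metis sup.cobounded1)
qed

lemma quantale_tensor_residuum_le:
  fixes tensor :: "'v::complete_lattice \<Rightarrow> 'v \<Rightarrow> 'v"
  assumes "quantale tensor k"
  shows "tensor a (residuum tensor a c) \<le> c"
proof -
  have "tensor a (residuum tensor a c) = Sup ((\<lambda>b. tensor a b) ` {b. tensor a b \<le> c})"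
    using assms unfolding quantale_def residuum_def by metis
  then show ?thesis
    by (auto intro: Sup_least)
qed

lemma quantale_le_residuum_iff:
  fixes tensor :: "'v::complete_lattice \<Rightarrow> 'v \<Rightarrow> 'v"
  assumes "quantale tensor k"
  shows "b \<le> residuum tensor a c \<longleftrightarrow> tensor a b \<le> c"
proof
  assume "b \<le> residuum tensor a c"
  then have "tensor a b \<le> tensor a (residuum tensor a c)"
    by (rule quantale_tensor_mono_right[OF assms])
  then show "tensor a b \<le> c"
    using quantale_tensor_residuum_le[OF assms] by (rule order_trans)
next
  assume "tensor a b \<le> c"
  then show "b \<le> residuum tensor a c"
    unfolding residuum_def by (auto intro: Sup_upper)
qed

lemma non_expansive_residuum_iff:
  fixes tensor :: "'v::complete_lattice \<Rightarrow> 'v \<Rightarrow> 'v"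
  assumes "quantale tensor k"
  shows "non_expansive X d (residuum tensor) g \<longleftrightarrow>
    (\<forall>x\<in>X. \<forall>x'\<in>X. tensor (g x) (d x x') \<le> g x')"
  unfolding non_expansive_def quantale_le_residuum_iff[OF assms] ..

definition mcshane_extension ::
    "('v::complete_lattice \<Rightarrow> 'v \<Rightarrow> 'v) \<Rightarrow> 'x set \<Rightarrow> ('x \<Rightarrow> 'x \<Rightarrow> 'v) \<Rightarrow> ('x \<Rightarrow> 'v) \<Rightarrow> 'x \<Rightarrow> 'v"
  where "mcshane_extension tensor Y d f x = Sup ((\<lambda>y. tensor (f y) (d y x)) ` Y)"

lemma non_expansive_mcshane_extension:
  fixes tensor :: "'v::complete_lattice \<Rightarrow> 'v \<Rightarrow> 'v"
  assumes q: "quantale tensor k" and cat: "V_category tensor k X d" and "Y \<subseteq> X"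
  shows "non_expansive X d (residuum tensor) (mcshane_extension tensor Y d f)"
  unfolding non_expansive_residuum_iff[OF q]
proof (intro ballI)
  fix x x' assume "x \<in> X" "x' \<in> X"
  let ?g = "mcshane_extension tensor Y d f"
  have assoc: "\<And>a b c. tensor (tensor a b) c = tensor a (tensor b c)"
    and comm: "\<And>a b. tensor a b = tensor b a"
    and distrib: "\<And>a B. tensor a (Sup B) = Sup ((\<lambda>b. tensor a b) ` B)"
    using q unfolding quantale_def by auto
  have "tensor (?g x) (d x x') = Sup ((\<lambda>y. tensor (d x x') (tensor (f y) (d y x))) ` Y)"
    unfolding mcshane_extension_def comm[of _ "d x x'"] distrib image_image ..
  also have "\<dots> \<le> ?g x'"
  proof (rule Sup_least, clarify)
    fix y assume "y \<in> Y"
    have "tensor (d x x') (tensor (f y) (d y x)) = tensor (f y) (tensor (d y x) (d x x'))"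
      by (metis assoc comm)
    also have "\<dots> \<le> tensor (f y) (d y x')"
      using cat \<open>y \<in> Y\<close> \<open>Y \<subseteq> X\<close> \<open>x \<in> X\<close> \<open>x' \<in> X\<close> unfolding V_category_def
      by (blast intro: quantale_tensor_mono_right[OF q])
    also have "\<dots> \<le> ?g x'"
      unfolding mcshane_extension_def using \<open>y \<in> Y\<close> by (auto intro: Sup_upper)
    finally show "tensor (d x x') (tensor (f y) (d y x)) \<le> ?g x'" .
  qed
  finally show "tensor (?g x) (d x x') \<le> ?g x'" .
qed

lemma mcshane_extension_eq:
  fixes tensor :: "'v::complete_lattice \<Rightarrow> 'v \<Rightarrow> 'v"
  assumes q: "quantale tensor k" and cat: "V_category tensor k X d" and "Y \<subseteq> X"
    and f: "non_expansive Y d (residuum tensor) f" and "y \<in> Y"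
  shows "mcshane_extension tensor Y d f y = f y"
proof (rule antisym)
  show "mcshane_extension tensor Y d f y \<le> f y"
    using f \<open>y \<in> Y\<close> unfolding non_expansive_residuum_iff[OF q] mcshane_extension_def
    by (auto intro: Sup_least)
next
  have "f y = tensor (f y) k"
    using q unfolding quantale_def by metis
  also have "\<dots> \<le> tensor (f y) (d y y)"
    using cat \<open>y \<in> Y\<close> \<open>Y \<subseteq> X\<close> unfolding V_category_def
    by (blast intro: quantale_tensor_mono_right[OF q])
  also have "\<dots> \<le> mcshane_extension tensor Y d f y"
    unfolding mcshane_extension_def using \<open>y \<in> Y\<close> by (auto intro: Sup_upper)
  finally show "f y \<le> mcshane_extension tensor Y d f y" .
qed

theorem mainTheorem2:
  fixes tensor :: "'v::complete_lattice \<Rightarrow> 'v \<Rightarrow> 'v" and k :: 'v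
    and X :: "'x set" and d :: "'x \<Rightarrow> 'x \<Rightarrow> 'v" and Y :: "'x set" and f :: "'x \<Rightarrow> 'v"
  assumes "quantale tensor k"
    and "V_category tensor k X d"
    and "Y \<subseteq> X"
    and "non_expansive Y d (residuum tensor) f"
  shows "\<exists>fbar. non_expansive X d (residuum tensor) fbar \<and> (\<forall>y\<in>Y. fbar y = f y)"
  using non_expansive_mcshane_extension[OF assms(1-3)] mcshane_extension_eq[OF assms]
  by blast

end
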